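(* There is an absolute constant $C>0$ such that for every $n\in\mathbb N$, all points $z_1,\dots,z_n\in\mathbb T$ and all $\alpha_1,\dots,\alpha_n>0$, the measure $\nu=\sum_{k=1}^n\alpha_k\delta_{z_k}$ satisfies $$\|\mathcal C\nu\|_{L^1(\mathbb D)}\ \ge\ C\,\frac{\sum_{k=1}^n\alpha_k^2}{\|\nu\|},$$ where $\|\nu\|=\sum_{k=1}^n\alpha_k$ is the total variation of $\nu$.
   Context: $\mathbb D$ is the open unit disc in $\mathbb C$, $\mathbb T=\partial\mathbb D$ the unit circle, and $L^1(\mathbb D)$ is taken with respect to planar Lebesgue measure $m$. For a measure $\mu$ on $\overline{\mathbb D}$, its Cauchy transform is $\mathcal C\mu(z)=\int\frac{d\mu(\xi)}{\xi-z}$ for $|z|<1$; thus $\mathcal C\nu(z)=\sum_{k=1}^n\frac{\alpha_k}{z_k-z}$. $\delta_{z}$ denotes the Dirac measure at $z$. *)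

theory Defs
  imports "HOL-Analysis.Analysis"
begin

definition cauchy_transform_discrete ::
  "nat \<Rightarrow> (nat \<Rightarrow> complex) \<Rightarrow> (nat \<Rightarrow> real) \<Rightarrow> complex \<Rightarrow> complex" where
  "cauchy_transform_discrete n z \<alpha> w = (\<Sum>k<n. complex_of_real (\<alpha> k) / (z k - w))"

definition L1_norm_disc :: "(complex \<Rightarrow> complex) \<Rightarrow> ennreal" where
  "L1_norm_disc f = (\<integral>\<^sup>+ w \<in> ball 0 1. ennreal (norm (f w)) \<partial>lborel)"

end

theory Submission
  imports Defs
begin

text \<open>For \<open>|w| < 1\<close> one has \<open>Re (w C\<nu>(w)) = \<Sum>\<^sub>k \<alpha>\<^sub>k Re (z\<^sub>k / (z\<^sub>k - w)) - \<parallel>\<nu>\<parallel>\<close>,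
  and each kernel \<open>Re (z\<^sub>k / (z\<^sub>k - w))\<close> is nonnegative (it is half the Poisson kernel
  plus \<open>1/2\<close>). On the ball \<open>B\<^sub>k\<close> of radius \<open>r\<^sub>k = \<alpha>\<^sub>k / (18 \<parallel>\<nu>\<parallel>)\<close> centred at
  \<open>(1 - 2 r\<^sub>k) z\<^sub>k\<close> the kernel exceeds \<open>1 / (9 r\<^sub>k)\<close>, so \<open>\<alpha>\<^sub>k\<close> times it exceeds \<open>2 \<parallel>\<nu>\<parallel>\<close>.
  Hence \<open>|C\<nu>(w)| \<ge> \<parallel>\<nu>\<parallel> N(w)\<close>, where \<open>N(w)\<close> counts the balls containing \<open>w\<close>, and
  integrating gives \<open>\<parallel>C\<nu>\<parallel>\<^sub>1 \<ge> \<parallel>\<nu>\<parallel> \<Sum>\<^sub>k \<pi> r\<^sub>k\<^sup>2 = \<pi>/324 \<Sum>\<^sub>k \<alpha>\<^sub>k\<^sup>2 / \<parallel>\<nu>\<parallel>\<close>.\<close>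

definition inner_ball :: "complex \<Rightarrow> real \<Rightarrow> complex set" where
  "inner_ball z r = ball (complex_of_real (1 - 2 * r) * z) r"

lemma emeasure_inner_ball:
  assumes "0 \<le> r"
  shows "emeasure lborel (inner_ball z r) = ennreal (pi * r\<^sup>2)"
  using assms by (simp add: inner_ball_def emeasure_ball unit_ball_vol_2)

lemma inner_ball_subset_ball:
  assumes "norm z = 1" "r \<le> 1/2"
  shows "inner_ball z r \<subseteq> ball 0 1"
proof
  fix w assume "w \<in> inner_ball z r"
  define c where "c = complex_of_real (1 - 2 * r) * z"
  have "norm (w - c) < r"
    using \<open>w \<in> inner_ball z r\<close> by (simp add: inner_ball_def c_def dist_norm norm_minus_commute)
  moreover have "norm c = 1 - 2 * r"
    using assms by (simp only: c_def norm_mult norm_of_real) simp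
  moreover have "norm w \<le> norm c + norm (w - c)"
    using norm_triangle_sub by blast
  ultimately have "norm w < 1"
    using norm_ge_zero[of "w - c"] by linarith
  then show "w \<in> ball 0 1"
    by simp
qed

lemma Re_divide_eq_Re_mult_cnj:
  fixes a b :: complex
  shows "Re (a / b) = Re (a * cnj b) / (norm b)\<^sup>2"
  by (simp add: Re_divide')

lemma Re_divide_diff_nonneg:
  fixes z w :: complex
  assumes "norm w \<le> norm z"
  shows "0 \<le> Re (z / (z - w))"
proof -
  have "Re (z * cnj w) \<le> norm z * norm w"
    using complex_Re_le_cmod[of "z * cnj w"] by (simp add: norm_mult)
  also have "\<dots> \<le> (norm z)\<^sup>2"
    using assms by (simp add: power2_eq_square mult_left_mono)
  moreover have "Re (z * cnj (z - w)) = (norm z)\<^sup>2 - Re (z * cnj w)"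
    by (simp add: right_diff_distrib flip: complex_norm_square)
  ultimately have "0 \<le> Re (z * cnj (z - w))"
    by simp
  then show ?thesis
    by (simp add: Re_divide_eq_Re_mult_cnj)
qed

lemma Re_divide_diff_ge_on_inner_ball:
  fixes z w :: complex
  assumes "norm z = 1" "w \<in> inner_ball z r"
  shows "1 / (9 * r) \<le> Re (z / (z - w))"
proof -
  txt \<open>In \<open>Re (z * cnj (z - w)) / |z - w|\<^sup>2\<close> the numerator exceeds \<open>r\<close> and \<open>|z - w| < 3 r\<close>.\<close>
  define d where "d = complex_of_real (1 - 2 * r) * z - w"
  have d: "norm d < r"
    using assms(2) by (simp add: inner_ball_def d_def dist_norm)
  then have r: "0 < r"
    using norm_ge_zero[of d] by linarith
  have diff: "z - w = complex_of_real (2 * r) * z + d"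
    by (simp add: d_def algebra_simps)
  have "norm (z - w) \<le> 2 * r + norm d"
    using norm_triangle_ineq[of "complex_of_real (2 * r) * z" d] assms(1) r
    by (simp add: diff norm_mult)
  with d have dist_lt: "norm (z - w) < 3 * r"
    by linarith
  have "z * cnj z = 1"
    using assms(1) by (simp flip: complex_norm_square)
  then have "z * cnj (z - w) = complex_of_real (2 * r) + z * cnj d"
    by (simp add: diff algebra_simps)
  then have "Re (z * cnj (z - w)) = 2 * r + Re (z * cnj d)"
    by simp
  moreover have "- norm d \<le> Re (z * cnj d)"
    using abs_Re_le_cmod[of "z * cnj d"] assms(1) by (simp add: norm_mult)
  ultimately have num_gt: "r < Re (z * cnj (z - w))"
    using d by linarith
  then have "0 < norm (z - w)"
    using r by auto
  with dist_lt have "(norm (z - w))\<^sup>2 \<le> 9 * r\<^sup>2"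
    using power_mono[of "norm (z - w)" "3 * r" 2] by (simp add: power_mult_distrib)
  have "1 / (9 * r) = r / (9 * r\<^sup>2)"
    using r by (simp add: power2_eq_square)
  also have "\<dots> \<le> Re (z * cnj (z - w)) / (9 * r\<^sup>2)"
    using num_gt r by (intro divide_right_mono) auto
  also have "\<dots> \<le> Re (z * cnj (z - w)) / (norm (z - w))\<^sup>2"
    using \<open>(norm (z - w))\<^sup>2 \<le> 9 * r\<^sup>2\<close> \<open>0 < norm (z - w)\<close> num_gt r
    by (intro divide_left_mono) auto
  finally show ?thesis
    by (simp add: Re_divide_eq_Re_mult_cnj)
qed

lemma Re_mult_cauchy_transform_discrete:
  assumes "\<forall>k<n. z k \<noteq> w"
  shows "Re (w * cauchy_transform_discrete n z \<alpha> w)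
    = (\<Sum>k<n. \<alpha> k * Re (z k / (z k - w))) - (\<Sum>k<n. \<alpha> k)"
proof -
  have "w * cauchy_transform_discrete n z \<alpha> w
      = (\<Sum>k<n. complex_of_real (\<alpha> k) * (z k / (z k - w) - 1))"
    unfolding cauchy_transform_discrete_def sum_distrib_left
    using assms by (intro sum.cong) (auto simp: field_simps)
  then have "Re (w * cauchy_transform_discrete n z \<alpha> w)
      = (\<Sum>k<n. Re (complex_of_real (\<alpha> k) * (z k / (z k - w) - 1)))"
    by (simp only: Re_sum)
  also have "\<dots> = (\<Sum>k<n. \<alpha> k * Re (z k / (z k - w)) - \<alpha> k)"
    by (intro sum.cong) (simp_all add: right_diff_distrib del: times_divide_eq_right)
  finally show ?thesis
    by (simp add: sum_subtractf)
qed

lemma indicator_inner_ball_le_Re_divide_diff: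
  fixes z w :: complex
  assumes "norm z = 1" "norm w \<le> 1"
  shows "1 / (9 * r) * indicator (inner_ball z r) w \<le> Re (z / (z - w))"
  using assms Re_divide_diff_ge_on_inner_ball[of z w r] Re_divide_diff_nonneg[of w z]
  by (simp split: split_indicator)

lemma sum_Re_divide_diff_le_norm_cauchy_transform_discrete:
  assumes z: "\<forall>k<n. norm (z k) = 1" and w: "norm w < 1"
  shows "(\<Sum>k<n. \<alpha> k * Re (z k / (z k - w)))
    \<le> norm (cauchy_transform_discrete n z \<alpha> w) + (\<Sum>k<n. \<alpha> k)"
proof -
  define f where "f = cauchy_transform_discrete n z \<alpha> w"
  have "\<forall>k<n. z k \<noteq> w"
    using z w by auto
  then have "(\<Sum>k<n. \<alpha> k * Re (z k / (z k - w))) = Re (w * f) + (\<Sum>k<n. \<alpha> k)"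
    using Re_mult_cauchy_transform_discrete[of n z w \<alpha>] unfolding f_def by auto
  also have "Re (w * f) \<le> norm w * norm f"
    by (metis complex_Re_le_cmod norm_mult)
  also have "\<dots> \<le> norm f"
    using w by (simp add: mult_left_le_one_le)
  finally show ?thesis
    unfolding f_def by simp
qed

lemma norm_cauchy_transform_discrete_ge_count:
  fixes z :: "nat \<Rightarrow> complex" and \<alpha> :: "nat \<Rightarrow> real"
  assumes z: "\<forall>k<n. norm (z k) = 1" and \<alpha>: "\<forall>k<n. 0 < \<alpha> k" and w: "norm w < 1"
  defines "A \<equiv> \<Sum>k<n. \<alpha> k"
  shows "A * (\<Sum>k<n. indicator (inner_ball (z k) (\<alpha> k / (18 * A))) w)
    \<le> norm (cauchy_transform_discrete n z \<alpha> w)"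
proof -
  define B where "B k = inner_ball (z k) (\<alpha> k / (18 * A))" for k
  define N where "N = (\<Sum>k<n. indicator (B k) w :: real)"
  have A: "0 \<le> A"
    unfolding A_def using \<alpha> by (intro sum_nonneg) (auto intro: less_imp_le)
  have "2 * A * N = (\<Sum>k<n. \<alpha> k * (1 / (9 * (\<alpha> k / (18 * A))) * indicator (B k) w))"
    unfolding N_def sum_distrib_left using \<alpha> by (intro sum.cong) auto
  also have "\<dots> \<le> (\<Sum>k<n. \<alpha> k * Re (z k / (z k - w)))"
    using z \<alpha> w unfolding B_def
    by (intro sum_mono mult_left_mono indicator_inner_ball_le_Re_divide_diff) auto
  also have "\<dots> \<le> norm (cauchy_transform_discrete n z \<alpha> w) + A"
    unfolding A_def using z w by (rule sum_Re_divide_diff_le_norm_cauchy_transform_discrete)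
  finally have twice: "2 * (A * N) \<le> norm (cauchy_transform_discrete n z \<alpha> w) + A"
    by (simp add: mult.assoc)
  have "N = 0 \<or> 1 \<le> N"
  proof (cases "\<exists>k<n. w \<in> B k")
    case True
    then obtain k where "k < n" "w \<in> B k"
      by blast
    then have "indicator (B k) w \<le> N"
      unfolding N_def by (intro member_le_sum) auto
    then show ?thesis
      using \<open>w \<in> B k\<close> by simp
  qed (simp add: N_def)
  then have "A * N \<le> norm (cauchy_transform_discrete n z \<alpha> w)"
  proof
    assume "1 \<le> N"
    then have "A \<le> A * N"
      using A mult_left_mono[of 1 N A] by simp
    with twice show ?thesis
      by linarith
  qed simp
  then show ?thesis
    by (simp add: N_def B_def)
qed

lemma nn_integral_cmult_sum_indicator:
  assumes "finite I" "\<And>i. i \<in> I \<Longrightarrow> B i \<in> sets M" "0 \<le> c"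
  shows "(\<integral>\<^sup>+ x. ennreal (c * (\<Sum>i\<in>I. indicator (B i) x)) \<partial>M)
    = ennreal c * (\<Sum>i\<in>I. emeasure M (B i))"
proof -
  have "ennreal (c * (\<Sum>i\<in>I. indicator (B i) x)) = (\<Sum>i\<in>I. ennreal c * indicator (B i) x)" for x
  proof -
    have "ennreal (c * (\<Sum>i\<in>I. indicator (B i) x)) = (\<Sum>i\<in>I. ennreal (c * indicator (B i) x))"
      using assms(3) by (subst sum_ennreal) (auto simp: sum_distrib_left)
    also have "\<dots> = (\<Sum>i\<in>I. ennreal c * indicator (B i) x)"
      by (intro sum.cong) (auto split: split_indicator)
    finally show ?thesis .
  qed
  then have "(\<integral>\<^sup>+ x. ennreal (c * (\<Sum>i\<in>I. indicator (B i) x)) \<partial>M)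
      = (\<Sum>i\<in>I. \<integral>\<^sup>+ x. ennreal c * indicator (B i) x \<partial>M)"
    using assms by (simp only:) (subst nn_integral_sum, auto)
  also have "\<dots> = ennreal c * (\<Sum>i\<in>I. emeasure M (B i))"
    using assms by (simp add: nn_integral_cmult_indicator sum_distrib_left)
  finally show ?thesis .
qed

lemma L1_norm_disc_cauchy_transform_discrete_ge:
  fixes z :: "nat \<Rightarrow> complex" and \<alpha> :: "nat \<Rightarrow> real"
  assumes z: "\<forall>k<n. norm (z k) = 1" and \<alpha>: "\<forall>k<n. 0 < \<alpha> k"
  shows "ennreal (pi / 324 * (\<Sum>k<n. (\<alpha> k)\<^sup>2) / (\<Sum>k<n. \<alpha> k))
    \<le> L1_norm_disc (cauchy_transform_discrete n z \<alpha>)"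
proof (cases "n = 0")
  case False
  define A where "A = (\<Sum>k<n. \<alpha> k)"
  define r where "r k = \<alpha> k / (18 * A)" for k
  define B where "B k = inner_ball (z k) (r k)" for k
  have A: "0 < A"
    unfolding A_def using \<alpha> False by (intro sum_pos) auto
  have \<alpha>_le_A: "\<alpha> k \<le> A" if "k < n" for k
    unfolding A_def using \<alpha> that by (intro member_le_sum) auto
  have r: "0 \<le> r k" "r k \<le> 1/2" if "k < n" for k
    using \<alpha>_le_A[OF that] \<alpha> that A by (auto simp: r_def field_simps)
  have B_sets: "B k \<in> sets lborel" for k
    by (simp add: B_def inner_ball_def)
  have B_disc: "B k \<subseteq> ball 0 1" if "k < n" for k
    unfolding B_def using z r that by (intro inner_ball_subset_ball) auto
  have measure_B: "ennreal (\<Sum>k<n. pi * (r k)\<^sup>2) = (\<Sum>k<n. emeasure lborel (B k))"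
    using r by (simp add: B_def emeasure_inner_ball sum_ennreal)
  have "pi / 324 * (\<Sum>k<n. (\<alpha> k)\<^sup>2) / A = A * (\<Sum>k<n. pi * (r k)\<^sup>2)"
    unfolding sum_distrib_left sum_divide_distrib
    using A by (intro sum.cong) (simp_all add: r_def field_simps power2_eq_square)
  then have "ennreal (pi / 324 * (\<Sum>k<n. (\<alpha> k)\<^sup>2) / A) = ennreal A * (\<Sum>k<n. emeasure lborel (B k))"
    using A by (simp add: ennreal_mult sum_nonneg flip: measure_B)
  also have "\<dots> = (\<integral>\<^sup>+ w. ennreal (A * (\<Sum>k<n. indicator (B k) w)) \<partial>lborel)"
    using A B_sets by (simp add: nn_integral_cmult_sum_indicator)
  also have "\<dots> \<le> L1_norm_disc (cauchy_transform_discrete n z \<alpha>)"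
    unfolding L1_norm_disc_def
  proof (intro nn_integral_mono)
    fix w
    show "ennreal (A * (\<Sum>k<n. indicator (B k) w))
      \<le> ennreal (norm (cauchy_transform_discrete n z \<alpha> w)) * indicator (ball 0 1) w"
    proof (cases "w \<in> ball 0 1")
      case True
      then show ?thesis
        using norm_cauchy_transform_discrete_ge_count[OF z \<alpha>, of w]
        by (simp add: B_def r_def A_def ennreal_leI)
    next
      case False
      then have "\<forall>k<n. w \<notin> B k"
        using B_disc by blast
      then show ?thesis
        by simp
    qed
  qed
  finally show ?thesis
    by (simp add: A_def)
qed simp

theorem theorem1p2:
  shows "\<exists>C::real. C > 0 \<and>
    (\<forall>(n::nat) (z::nat \<Rightarrow> complex) (\<alpha>::nat \<Rightarrow> real).
       (\<forall>k<n. norm (z k) = 1) \<longrightarrow> (\<forall>k<n. \<alpha> k > 0) \<longrightarrow>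
       L1_norm_disc (cauchy_transform_discrete n z \<alpha>)
         \<ge> ennreal (C * (\<Sum>k<n. (\<alpha> k)\<^sup>2) / (\<Sum>k<n. \<alpha> k)))"
  using L1_norm_disc_cauchy_transform_discrete_ge
  by (intro exI[of _ "pi / 324"]) (simp add: pi_gt_zero)

end
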